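(* The theory whose axioms are Extensionality, Separation, and the Hierarchy axiom $\forall a\exists h\forall k\big(k\subseteq h\to\exists s(s=\mathrm{pot}(k)\wedge(s\in h\vee a\subseteq s))\big)$ proves $\mathsf{LT}$ (equivalently, proves Stratification: every set is a subset of some level).
   Context: Second-order logic with Comprehension, single primitive $\in$. Extensionality: $\forall a\forall b(\forall x(x\in a\leftrightarrow x\in b)\to a=b)$. Separation: $\forall F\forall a\exists b\forall x(x\in b\leftrightarrow(F(x)\wedge x\in a))$. Potentiation $\mathrm{pot}(a)=\{x:\exists c(x\subseteq c\wedge c\in a)\}$. A history is $h$ with $x=\mathrm{pot}(x\cap h)$ for all $x\in h$; a level is $\mathrm{pot}(h)$ for a history $h$. $\mathsf{LT}$ has axioms Extensionality, Separation and Stratification. *)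

theory Defs
  imports Main
begin

text \<open>A model of the language with single primitive membership: a type 'a of objects
and a relation m, where m x y means x is a member of y. Second-order quantifiers
range over predicates 'a \<Rightarrow> bool (full comprehension).\<close>

definition subs :: "('a \<Rightarrow> 'a \<Rightarrow> bool) \<Rightarrow> 'a \<Rightarrow> 'a \<Rightarrow> bool" where
  "subs m x y \<longleftrightarrow> (\<forall>z. m z x \<longrightarrow> m z y)"

definition is_pot :: "('a \<Rightarrow> 'a \<Rightarrow> bool) \<Rightarrow> 'a \<Rightarrow> 'a \<Rightarrow> bool" where
  "is_pot m s a \<longleftrightarrow> (\<forall>x. m x s \<longleftrightarrow> (\<exists>c. subs m x c \<and> m c a))"

text \<open>h is a history: x = pot(x \<inter> h) for all x \<in> h.\<close>
definition is_history :: "('a \<Rightarrow> 'a \<Rightarrow> bool) \<Rightarrow> 'a \<Rightarrow> bool" where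
  "is_history m h \<longleftrightarrow>
     (\<forall>x. m x h \<longrightarrow> (\<forall>y. m y x \<longleftrightarrow> (\<exists>c. subs m y c \<and> m c x \<and> m c h)))"

definition is_level :: "('a \<Rightarrow> 'a \<Rightarrow> bool) \<Rightarrow> 'a \<Rightarrow> bool" where
  "is_level m l \<longleftrightarrow> (\<exists>h. is_history m h \<and> is_pot m l h)"

definition Extensionality :: "('a \<Rightarrow> 'a \<Rightarrow> bool) \<Rightarrow> bool" where
  "Extensionality m \<longleftrightarrow> (\<forall>a b. (\<forall>x. m x a \<longleftrightarrow> m x b) \<longrightarrow> a = b)"

definition Separation :: "('a \<Rightarrow> 'a \<Rightarrow> bool) \<Rightarrow> bool" where
  "Separation m \<longleftrightarrow> (\<forall>F a. \<exists>b. \<forall>x. m x b \<longleftrightarrow> (F x \<and> m x a))"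

definition Hierarchy :: "('a \<Rightarrow> 'a \<Rightarrow> bool) \<Rightarrow> bool" where
  "Hierarchy m \<longleftrightarrow>
     (\<forall>a. \<exists>h. \<forall>k. subs m k h \<longrightarrow> (\<exists>s. is_pot m s k \<and> (m s h \<or> subs m a s)))"

definition Stratification :: "('a \<Rightarrow> 'a \<Rightarrow> bool) \<Rightarrow> bool" where
  "Stratification m \<longleftrightarrow> (\<forall>a. \<exists>l. is_level m l \<and> subs m a l)"

definition LT :: "('a \<Rightarrow> 'a \<Rightarrow> bool) \<Rightarrow> bool" where
  "LT m \<longleftrightarrow> Extensionality m \<and> Separation m \<and> Stratification m"

end

theory Submission
  imports Defs
begin

text \<open>Let h be the set given by the Hierarchy axiom for a, and let g be the set of members of h
that are obtained by well-founded iteration of pot inside h. Every member of g is pot(k) for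
some k \<subseteq> g, so g is a history and s = pot(g) is a level. Since g \<subseteq> h, Hierarchy yields
s \<in> h or a \<subseteq> s. If s \<in> h, then s itself is generated, so s \<in> g and hence s \<in> pot(g) = s;
but no generated set is a member of itself, since pot(k) \<in> pot(k) forces c \<in> c for some
c \<in> k. Hence a \<subseteq> s.\<close>

lemma subs_refl: "subs m x x"
  by (simp add: subs_def)

lemma mem_pot_if_mem: "is_pot m x k \<Longrightarrow> m c k \<Longrightarrow> m c x"
  using subs_refl[of m c] unfolding is_pot_def by blast

lemma mem_pot_if_subs_mem: "is_pot m x k \<Longrightarrow> subs m y c \<Longrightarrow> m c x \<Longrightarrow> m y x"
  unfolding is_pot_def subs_def by blast

lemma pot_not_mem_self:
  assumes "is_pot m x k" and "\<And>c. m c k \<Longrightarrow> \<not> m c c"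
  shows "\<not> m x x"
proof
  assume "m x x"
  then obtain c where "subs m x c" "m c k"
    using assms(1) unfolding is_pot_def by blast
  moreover from \<open>m c k\<close> have "m c x"
    using assms(1) by (rule mem_pot_if_mem[rotated])
  ultimately show False
    using assms(2) unfolding subs_def by blast
qed

lemma is_history_if_members_pot:
  assumes "\<And>x. m x h \<Longrightarrow> \<exists>k. is_pot m x k \<and> subs m k h"
  shows "is_history m h"
  unfolding is_history_def
proof (intro allI impI)
  fix x y
  assume "m x h"
  then obtain k where k: "is_pot m x k" "subs m k h"
    using assms by blast
  show "m y x \<longleftrightarrow> (\<exists>c. subs m y c \<and> m c x \<and> m c h)"
  proof
    assume "m y x"
    then obtain c where "subs m y c" "m c k"
      using k(1) unfolding is_pot_def by blast
    moreover from \<open>m c k\<close> have "m c x"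
      by (rule mem_pot_if_mem[OF k(1)])
    moreover from \<open>m c k\<close> have "m c h"
      using k(2) unfolding subs_def by blast
    ultimately show "\<exists>c. subs m y c \<and> m c x \<and> m c h"
      by blast
  qed (use mem_pot_if_subs_mem[OF k(1)] in blast)
qed

inductive pot_generated :: "('a \<Rightarrow> 'a \<Rightarrow> bool) \<Rightarrow> 'a \<Rightarrow> 'a \<Rightarrow> bool" for m h where
  "m x h \<Longrightarrow> is_pot m x k \<Longrightarrow> (\<And>c. m c k \<Longrightarrow> pot_generated m h c) \<Longrightarrow> pot_generated m h x"

lemma pot_generated_mem: "pot_generated m h x \<Longrightarrow> m x h"
  by (induction rule: pot_generated.induct)

lemma pot_generated_not_mem_self: "pot_generated m h x \<Longrightarrow> \<not> m x x"
  by (induction rule: pot_generated.induct) (rule pot_not_mem_self)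

lemma is_history_pot_generated:
  assumes g: "\<And>x. m x g \<longleftrightarrow> pot_generated m h x"
  shows "is_history m g"
proof (rule is_history_if_members_pot)
  fix x
  assume "m x g"
  then have "pot_generated m h x"
    using g by blast
  then obtain k where "is_pot m x k" "\<And>c. m c k \<Longrightarrow> pot_generated m h c"
    by (cases rule: pot_generated.cases) blast
  then show "\<exists>k. is_pot m x k \<and> subs m k g"
    using g unfolding subs_def by blast
qed

lemma pot_of_pot_generated_not_mem:
  assumes g: "\<And>x. m x g \<longleftrightarrow> pot_generated m h x" and s: "is_pot m s g"
  shows "\<not> m s h"
proof
  assume "m s h"
  have "pot_generated m h s"
    by (rule pot_generated.intros[OF \<open>m s h\<close> s]) (simp add: g)
  then have "\<not> m s s"
    by (rule pot_generated_not_mem_self)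
  moreover from \<open>pot_generated m h s\<close> have "m s s"
    by (intro mem_pot_if_mem[OF s]) (simp add: g)
  ultimately show False
    by contradiction
qed

lemma Stratification_if_Separation_Hierarchy:
  assumes "Separation m" and "Hierarchy m"
  shows "Stratification m"
  unfolding Stratification_def
proof
  fix a
  obtain h where h: "\<And>k. subs m k h \<Longrightarrow> \<exists>s. is_pot m s k \<and> (m s h \<or> subs m a s)"
    using assms(2) unfolding Hierarchy_def by blast
  obtain g where g: "\<And>x. m x g \<longleftrightarrow> pot_generated m h x"
    using assms(1) pot_generated_mem unfolding Separation_def by metis
  have "subs m g h"
    unfolding subs_def by (simp add: g pot_generated_mem)
  then obtain s where s: "is_pot m s g" and "m s h \<or> subs m a s"
    using h by blast
  with pot_of_pot_generated_not_mem[OF g s] have "subs m a s"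
    by blast
  moreover have "is_level m s"
    unfolding is_level_def using is_history_pot_generated[OF g] s by blast
  ultimately show "\<exists>l. is_level m l \<and> subs m a l"
    by blast
qed

theorem proposition32:
  fixes m :: "'a \<Rightarrow> 'a \<Rightarrow> bool"
  assumes "Extensionality m" and "Separation m" and "Hierarchy m"
  shows "LT m"
  unfolding LT_def using assms Stratification_if_Separation_Hierarchy[OF assms(2,3)] by blast

end
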